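(* Let $c\ge0$ and $g_0,g_1,\dots,g_K\in\mathbb{R}^m$. Let $d^*$ be the solution of $$\max_{d\in\mathbb{R}^m}\ \min_{i\in[K]} g_i^\top d\quad\text{s.t.}\quad \|g_0-d\|\le c\|g_0\|.$$ Then $$d^*=g_0+\frac{c\|g_0\|}{\|g_{w^*}\|}\,g_{w^*},$$ where $g_{w^*}=\sum_i w^*_i g_i$ and $w^*$ is the solution of $$\min_{w\in\mathcal W}\ g_w^\top g_0+c\|g_0\|\,\|g_w\|.$$ In addition, $$\min_i g_i^\top d^*=g_{w^*}^\top g_0+c\|g_0\|\,\|g_{w^*}\|.$$
   Context: $\mathcal W=\{w\in\mathbb{R}^K: \sum_i w_i=1,\ w_i\ge0\ \forall i\in[K]\}$ is the probability simplex, and for $w\in\mathcal W$, $g_w=\sum_{i=1}^K w_i g_i$. $[K]=\{1,\dots,K\}$. *)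

theory Defs
  imports "HOL-Analysis.Analysis"
begin

definition prob_simplex :: "nat \<Rightarrow> (nat \<Rightarrow> real) set" where
  "prob_simplex K = {w. (\<forall>i\<in>{1..K}. 0 \<le> w i) \<and> (\<Sum>i\<in>{1..K}. w i) = 1}"

definition gw :: "nat \<Rightarrow> (nat \<Rightarrow> 'a::real_vector) \<Rightarrow> (nat \<Rightarrow> real) \<Rightarrow> 'a" where
  "gw K g w = (\<Sum>i\<in>{1..K}. w i *\<^sub>R g i)"

definition primal_obj :: "nat \<Rightarrow> (nat \<Rightarrow> 'a::real_inner) \<Rightarrow> 'a \<Rightarrow> real" where
  "primal_obj K g d = (MIN i\<in>{1..K}. g i \<bullet> d)"

definition dual_obj :: "nat \<Rightarrow> real \<Rightarrow> (nat \<Rightarrow> 'a::real_inner) \<Rightarrow> (nat \<Rightarrow> real) \<Rightarrow> real" where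
  "dual_obj K c g w = gw K g w \<bullet> g 0 + c * norm (g 0) * norm (gw K g w)"

definition is_primal_sol :: "nat \<Rightarrow> real \<Rightarrow> (nat \<Rightarrow> 'a::real_inner) \<Rightarrow> 'a \<Rightarrow> bool" where
  "is_primal_sol K c g d \<longleftrightarrow>
     norm (g 0 - d) \<le> c * norm (g 0) \<and>
     (\<forall>d'. norm (g 0 - d') \<le> c * norm (g 0) \<longrightarrow> primal_obj K g d' \<le> primal_obj K g d)"

definition is_dual_sol :: "nat \<Rightarrow> real \<Rightarrow> (nat \<Rightarrow> 'a::real_inner) \<Rightarrow> (nat \<Rightarrow> real) \<Rightarrow> bool" where
  "is_dual_sol K c g w \<longleftrightarrow>
     w \<in> prob_simplex K \<and> (\<forall>w'\<in>prob_simplex K. dual_obj K c g w \<le> dual_obj K c g w')"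

end

theory Submission
  imports Defs
begin

(* Write r = c * norm g0. Weak duality: for feasible d and w in the simplex, min_i g_i.d <= g_w.d
   <= g_w.g0 + r * norm g_w by Cauchy-Schwarz. Strong duality: minimise the smoothed dual objective
   y.g0 + r * sqrt (norm y ^ 2 + delta ^ 2) over the convex hull of the g_i, at a point a. Its
   first-order condition says that d = g0 + (r / s) a, with s = sqrt (norm a ^ 2 + delta ^ 2), is
   feasible and satisfies x.d >= a.d on the hull, while a.d is within r * delta of the dual value;
   let delta -> 0. Finally an optimal d makes Cauchy-Schwarz an equality, which forces
   d - g0 = (r / norm g_w) g_w. *)

lemma has_derivative_min_on_convex_nonneg:
  fixes f :: "'a::real_normed_vector \<Rightarrow> real"
  assumes deriv: "(f has_derivative f') (at a)"
    and "convex S" "a \<in> S" "x \<in> S" and min: "\<And>y. y \<in> S \<Longrightarrow> f a \<le> f y"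
  shows "0 \<le> f' (x - a)"
proof -
  interpret f': bounded_linear f'
    using deriv by (rule has_derivative_bounded_linear)
  define \<phi> where "\<phi> t = f (a + t *\<^sub>R (x - a))" for t
  have "((\<lambda>t. a + t *\<^sub>R (x - a)) has_derivative (\<lambda>t. t *\<^sub>R (x - a))) (at 0)"
    by (intro derivative_eq_intros) auto
  then have "(\<phi> has_derivative (\<lambda>t. f' (t *\<^sub>R (x - a)))) (at 0)"
    unfolding \<phi>_def using has_derivative_compose[where g = f] deriv by fastforce
  then have "(\<phi> has_real_derivative f' (x - a)) (at 0)"
    by (simp add: has_field_derivative_def f'.scaleR mult.commute[of _ "f' (x - a)"])
  then have "(\<phi> has_real_derivative f' (x - a)) (at_right 0)"
    by (rule has_field_derivative_at_within)
  then have lim: "((\<lambda>t. (\<phi> t - \<phi> 0) / t) \<longlongrightarrow> f' (x - a)) (at_right 0)"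
    by (simp add: has_field_derivative_iff)
  have "0 \<le> (\<phi> t - \<phi> 0) / t" if "0 < t" "t \<le> 1" for t
  proof -
    have "a + t *\<^sub>R (x - a) = (1 - t) *\<^sub>R a + t *\<^sub>R x"
      by (simp add: algebra_simps)
    then have "a + t *\<^sub>R (x - a) \<in> S"
      using \<open>convex S\<close> \<open>a \<in> S\<close> \<open>x \<in> S\<close> that by (simp add: convex_def)
    then show ?thesis
      using min that by (simp add: \<phi>_def)
  qed
  then have "\<forall>\<^sub>F t in at_right 0. 0 \<le> (\<phi> t - \<phi> 0) / t"
    by (auto simp: eventually_at_right_field intro: exI[of _ 1])
  then show ?thesis
    using lim by (intro tendsto_lowerbound) auto
qed

lemma exists_ball_point_above_dual_bound:
  fixes C :: "'a::real_inner set"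
  assumes "compact C" "convex C" "C \<noteq> {}" "0 \<le> r" "0 < e"
    and dual_bound: "\<And>y. y \<in> C \<Longrightarrow> V \<le> y \<bullet> g0 + r * norm y"
  shows "\<exists>d. norm (d - g0) \<le> r \<and> (\<forall>x\<in>C. V - e \<le> x \<bullet> d)"
proof -
  define \<delta> where "\<delta> = e / (r + 1)"
  have "0 < \<delta>" "r * \<delta> \<le> e"
    using \<open>0 \<le> r\<close> \<open>0 < e\<close> by (auto simp: \<delta>_def field_simps)
  \<comment> \<open>the dual objective is not differentiable at 0, so smooth it\<close>
  define f where "f y = y \<bullet> g0 + r * sqrt (y \<bullet> y + \<delta>\<^sup>2)" for y
  have "continuous_on C f"
    unfolding f_def by (intro continuous_intros)
  then obtain a where "a \<in> C" and a_min: "\<And>y. y \<in> C \<Longrightarrow> f a \<le> f y"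
    using continuous_attains_inf[OF \<open>compact C\<close> \<open>C \<noteq> {}\<close>] by blast
  define s where "s = sqrt (a \<bullet> a + \<delta>\<^sup>2)"
  have s_sq: "s\<^sup>2 = a \<bullet> a + \<delta>\<^sup>2"
    by (simp add: s_def add_nonneg_nonneg)
  have "0 < s"
    using \<open>0 < \<delta>\<close> by (simp add: s_def add_nonneg_pos)
  have "norm a \<le> s" "\<delta> \<le> s"
    unfolding s_def by (auto intro!: real_le_rsqrt simp: power2_norm_eq_inner)
  define d where "d = g0 + (r / s) *\<^sub>R a"
  have "norm (d - g0) = r * (norm a / s)"
    using \<open>0 \<le> r\<close> \<open>0 < s\<close> by (simp add: d_def)
  also have "\<dots> \<le> r"
    using \<open>norm a \<le> s\<close> \<open>0 < s\<close> \<open>0 \<le> r\<close> by (intro mult_left_le) simp_all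
  finally have d_feasible: "norm (d - g0) \<le> r" .
  have f_deriv: "(f has_derivative (\<lambda>h. h \<bullet> d)) (at a)"
  proof -
    have "0 < a \<bullet> a + \<delta>\<^sup>2"
      using \<open>0 < \<delta>\<close> by (simp add: add_nonneg_pos)
    then show ?thesis
      unfolding f_def d_def s_def
      by (intro derivative_eq_intros refl) (auto simp: inner_add_right inner_commute field_simps)
  qed
  have a_below: "a \<bullet> d \<le> x \<bullet> d" if "x \<in> C" for x
    using has_derivative_min_on_convex_nonneg[OF f_deriv \<open>convex C\<close> \<open>a \<in> C\<close> that a_min]
    by (simp add: inner_diff_left)
  have "a \<bullet> a / s = s - \<delta>\<^sup>2 / s"
    using \<open>0 < s\<close> s_sq by (simp add: field_simps power2_eq_square)
  then have "a \<bullet> d = f a - r * (\<delta>\<^sup>2 / s)"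
    by (simp add: f_def d_def s_def[symmetric] inner_add_right right_diff_distrib
        flip: times_divide_eq_right)
  moreover have "\<delta>\<^sup>2 / s \<le> \<delta>"
    using \<open>\<delta> \<le> s\<close> \<open>0 < \<delta>\<close> by (simp add: power2_eq_square divide_le_eq mult_left_mono)
  moreover have "V \<le> f a"
    using dual_bound[OF \<open>a \<in> C\<close>] \<open>norm a \<le> s\<close> \<open>0 \<le> r\<close> mult_left_mono
    by (fastforce simp: f_def s_def[symmetric])
  ultimately have "V - r * \<delta> \<le> a \<bullet> d"
    using \<open>0 \<le> r\<close> mult_left_mono by fastforce
  then show ?thesis
    using d_feasible a_below \<open>r * \<delta> \<le> e\<close> by force
qed

lemma inner_eq_norm_mult_bound_imp_eq:
  fixes a u :: "'a::real_inner"
  assumes "norm u \<le> r" "a \<noteq> 0" "a \<bullet> u = norm a * r"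
  shows "u = (r / norm a) *\<^sub>R a"
proof -
  have "norm a * r \<le> norm a * norm u"
    using assms(3) norm_cauchy_schwarz[of a u] by simp
  then have "norm u = r"
    using assms(1,2) by (simp add: antisym)
  then have "norm a *\<^sub>R u = r *\<^sub>R a"
    using assms(3) norm_cauchy_schwarz_eq[of a u] by simp
  then have "u = inverse (norm a) *\<^sub>R (r *\<^sub>R a)"
    using assms(2) by (metis norm_eq_zero scaleR_scaleR left_inverse scaleR_one)
  then show ?thesis
    by (simp add: divide_inverse_commute)
qed

lemma convex_hull_subset_gw_image:
  "convex hull (g ` {1..K}) \<subseteq> gw K g ` prob_simplex K"
proof (rule hull_minimal)
  show "g ` {1..K} \<subseteq> gw K g ` prob_simplex K"
  proof
    fix y assume "y \<in> g ` {1..K}"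
    then obtain i where i: "i \<in> {1..K}" "y = g i" by auto
    define w where "w j = (if j = i then 1 else 0 :: real)" for j
    have "w \<in> prob_simplex K"
      using i by (simp add: prob_simplex_def w_def)
    moreover have "w j *\<^sub>R g j = (if j = i then y else 0)" for j
      using i by (simp add: w_def)
    then have "gw K g w = y"
      using i by (simp add: gw_def)
    ultimately show "y \<in> gw K g ` prob_simplex K" by blast
  qed
  show "convex (gw K g ` prob_simplex K)"
    unfolding convex_def
  proof (intro ballI allI impI)
    fix x y and u v :: real
    assume "x \<in> gw K g ` prob_simplex K" "y \<in> gw K g ` prob_simplex K"
      and uv: "0 \<le> u" "0 \<le> v" "u + v = 1"
    then obtain w1 w2 where w: "w1 \<in> prob_simplex K" "x = gw K g w1"
      "w2 \<in> prob_simplex K" "y = gw K g w2" by blast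
    define w where "w j = u * w1 j + v * w2 j" for j
    have "w \<in> prob_simplex K"
      using w uv by (auto simp: prob_simplex_def w_def sum.distrib simp flip: sum_distrib_left)
    moreover have "gw K g w = u *\<^sub>R x + v *\<^sub>R y"
      using w by (simp add: gw_def w_def scaleR_add_left sum.distrib scaleR_sum_right)
    ultimately show "u *\<^sub>R x + v *\<^sub>R y \<in> gw K g ` prob_simplex K" by force
  qed
qed

lemma primal_obj_le:
  "i \<in> {1..K} \<Longrightarrow> primal_obj K g d \<le> g i \<bullet> d"
  unfolding primal_obj_def by (intro Min_le) auto

lemma primal_obj_geI:
  assumes "1 \<le> K" "\<And>i. i \<in> {1..K} \<Longrightarrow> m \<le> g i \<bullet> d"
  shows "m \<le> primal_obj K g d"
  unfolding primal_obj_def using assms by (subst Min_ge_iff) auto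

lemma primal_obj_le_gw:
  assumes "w \<in> prob_simplex K"
  shows "primal_obj K g d \<le> gw K g w \<bullet> d"
proof -
  have w: "\<And>i. i \<in> {1..K} \<Longrightarrow> 0 \<le> w i" "(\<Sum>i\<in>{1..K}. w i) = 1"
    using assms by (auto simp: prob_simplex_def)
  have "primal_obj K g d = (\<Sum>i\<in>{1..K}. w i * primal_obj K g d)"
    using w by (simp flip: sum_distrib_right)
  also have "\<dots> \<le> (\<Sum>i\<in>{1..K}. w i * (g i \<bullet> d))"
    using w by (intro sum_mono mult_left_mono primal_obj_le) auto
  also have "\<dots> = gw K g w \<bullet> d"
    by (simp add: gw_def inner_sum_left)
  finally show ?thesis .
qed

theorem lemma1:
  fixes g :: "nat \<Rightarrow> 'a::euclidean_space" and c :: real and K :: nat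
    and d :: 'a and w :: "nat \<Rightarrow> real"
  assumes "0 \<le> c" and "1 \<le> K"
    and "is_primal_sol K c g d"
    and "is_dual_sol K c g w"
  shows "(gw K g w \<noteq> 0 \<longrightarrow>
            d = g 0 + (c * norm (g 0) / norm (gw K g w)) *\<^sub>R gw K g w)
         \<and> primal_obj K g d = dual_obj K c g w"
proof -
  define r a V where "r = c * norm (g 0)" and "a = gw K g w" and "V = dual_obj K c g w"
  let ?C = "convex hull (g ` {1..K})"
  have "0 \<le> r"
    using assms(1) by (simp add: r_def)
  have V: "V = a \<bullet> g 0 + r * norm a"
    by (simp add: V_def a_def r_def dual_obj_def)
  have d_feasible: "norm (d - g 0) \<le> r"
    and d_max: "\<And>d'. norm (d' - g 0) \<le> r \<Longrightarrow> primal_obj K g d' \<le> primal_obj K g d"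
    using assms(3) by (auto simp: is_primal_sol_def r_def norm_minus_commute)
  have "w \<in> prob_simplex K" and V_min: "\<And>y. y \<in> ?C \<Longrightarrow> V \<le> y \<bullet> g 0 + r * norm y"
    using assms(4) convex_hull_subset_gw_image[of g K]
    by (auto simp: is_dual_sol_def dual_obj_def V_def r_def)
  have "a \<bullet> (d - g 0) \<le> norm a * r"
    using norm_cauchy_schwarz[of a "d - g 0"] d_feasible
    by (meson mult_left_mono norm_ge_zero order_trans)
  then have weak: "primal_obj K g d \<le> a \<bullet> d" "a \<bullet> d \<le> V"
    using primal_obj_le_gw[OF \<open>w \<in> prob_simplex K\<close>] by (auto simp: a_def V inner_diff_right mult.commute)
  have strong: "V \<le> primal_obj K g d"
  proof (rule field_le_epsilon)
    fix e :: real assume "0 < e"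
    have "compact ?C" "?C \<noteq> {}"
      using assms(2) by (auto intro: compact_convex_hull finite_imp_compact)
    then obtain d' where "norm (d' - g 0) \<le> r" and "\<forall>x\<in>?C. V - e \<le> x \<bullet> d'"
      using exists_ball_point_above_dual_bound[OF _ convex_convex_hull _ \<open>0 \<le> r\<close> \<open>0 < e\<close> V_min] by blast
    then have "V - e \<le> primal_obj K g d'"
      using assms(2) by (intro primal_obj_geI) (simp_all add: hull_inc)
    also have "\<dots> \<le> primal_obj K g d"
      by (rule d_max) fact
    finally show "V \<le> primal_obj K g d + e" by simp
  qed
  have "a \<bullet> (d - g 0) = norm a * r"
    using weak strong V by (simp add: inner_diff_right mult.commute)
  then have "d = g 0 + (r / norm a) *\<^sub>R a" if "a \<noteq> 0"
    using inner_eq_norm_mult_bound_imp_eq[OF d_feasible that] by (simp add: algebra_simps)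
  then show ?thesis
    using weak strong by (auto simp: a_def r_def V_def)
qed

end
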